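(* Let $a\geq 3$ and $m\geq 2a^2-a+2$ be integers, and suppose $[C(m,a)]$ is colored with red and blue so that there is no monochromatic solution of $L(m,a)$ in $[C(m,a)]$, with both $a-2$ and $a-1$ red. If $d$ is an integer with $a\mid d$ and $m-1\leq d\leq 2m-2$, then $d/a$ is blue.
   Context: For integers $m\geq 3$, $a\geq 1$, $L(m,a)$ denotes the equation $x_1+x_2+\cdots+x_{m-1}=a x_m$. For a positive integer $n$, $[n]=\{1,\dots,n\}$. A solution of $L(m,a)$ in $[n]$ is an $m$-tuple $(x_1,\dots,x_m)\in[n]^m$ (entries not necessarily distinct) satisfying the equation; given a 2-coloring of $[n]$, it is monochromatic if all $x_i$ have the same color. $C(m,a)$ denotes $\left\lceil \frac{m-1}{a}\left\lceil \frac{m-1}{a}\right\rceil\right\rceil$. *)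

theory Defs
  imports Complex_Main
begin

definition Cma :: "nat \<Rightarrow> nat \<Rightarrow> nat" where
  "Cma m a = nat (ceiling ((of_nat (m - 1) / of_nat a :: real) * of_int (ceiling (of_nat (m - 1) / of_nat a :: real))))"

definition is_solution :: "nat \<Rightarrow> nat \<Rightarrow> nat \<Rightarrow> (nat \<Rightarrow> nat) \<Rightarrow> bool" where
  "is_solution m a n x \<longleftrightarrow> (\<forall>i\<in>{1..m}. x i \<in> {1..n}) \<and> (\<Sum>i=1..m-1. x i) = a * x m"

text \<open>A 2-colouring of [n] is a function col :: nat => bool (True = red, False = blue),
  only its values on [n] being relevant.\<close>
definition has_mono_solution :: "nat \<Rightarrow> nat \<Rightarrow> nat \<Rightarrow> (nat \<Rightarrow> bool) \<Rightarrow> bool" where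
  "has_mono_solution m a n col \<longleftrightarrow>
     (\<exists>x. is_solution m a n x \<and> (\<exists>c. \<forall>i\<in>{1..m}. col (x i) = c))"

end

theory Submission
  imports Defs
begin

text \<open>
  Throughout, s = m - 1 is the number of summands of L(m,a), n = C(m,a) the size of the
  coloured interval, and red/blue are the colours True/False.

  A monochromatic solution is obtained from any list of s
  numbers of one colour whose sum is a times a further number of that colour; a sum
  v with j*lo <= v <= j*hi can always be split into j parts lying in [lo, hi].
  Using the red numbers a - 2 and a - 1, every number in the interval
  [lo, hi] = [ceil(s(a-2)/a), floor(s(a-1)/a)] is blue.  Writing a*hi as
  (s - j) copies of t plus j numbers from [lo, hi] for (t, j) = (1, a - 1) and
  (2, a - 2) then forces 1 and 2 to be red.  Finally, if s <= d <= 2s and a divides d,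
  then d is a sum of s ones and twos, so d/a must be blue.
\<close>

lemma mono_solution_of_list:
  assumes m_pos: "m \<ge> 1"
    and xs: "length xs = m - 1" "set xs \<subseteq> {1..n}" "\<forall>x\<in>set xs. col x = c"
    and w: "w \<in> {1..n}" "col w = c"
    and sum_xs: "sum_list xs = a * w"
  shows "has_mono_solution m a n col"
proof -
  define x where "x i = (if i < m then xs ! (i - 1) else w)" for i
  have "(\<Sum>i=1..m-1. x i) = (\<Sum>k<m-1. x (Suc k))"
    by (simp add: sum.atLeast1_atMost_eq)
  also have "\<dots> = (\<Sum>k<length xs. xs ! k)"
    using xs(1) by (intro sum.cong) (auto simp: x_def)
  also have "\<dots> = a * x m"
    using sum_xs by (simp add: sum_list_sum_nth atLeast0LessThan x_def)
  finally have sum_x: "(\<Sum>i=1..m-1. x i) = a * x m" .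
  have entries: "x i \<in> {1..n} \<and> col (x i) = c" if "i \<in> {1..m}" for i
  proof (cases "i < m")
    case True
    then have "xs ! (i - 1) \<in> set xs" using that xs(1) by (intro nth_mem) auto
    then show ?thesis using True xs by (auto simp: x_def)
  qed (use w in \<open>auto simp: x_def\<close>)
  then have "is_solution m a n x" using sum_x unfolding is_solution_def by simp
  moreover have "\<forall>i\<in>{1..m}. col (x i) = c" using entries by simp
  ultimately show ?thesis unfolding has_mono_solution_def by blast
qed

text \<open>Any v with j*lo <= v <= j*hi is a sum of j numbers from [lo, hi]
  (take parts as equal as possible).\<close>
lemma sum_list_in_interval:
  fixes j v lo hi :: nat
  assumes lower: "j * lo \<le> v" and upper: "v \<le> j * hi"
  shows "\<exists>xs. length xs = j \<and> set xs \<subseteq> {lo..hi} \<and> sum_list xs = v"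
proof (cases "j = 0")
  case True
  then show ?thesis using upper by auto
next
  case False
  define q where "q = v div j"
  define r where "r = v mod j"
  have v_eq: "v = j * q + r" and r_less: "r < j"
    using False by (simp_all add: q_def r_def)
  have "j * lo < j * Suc q" using lower v_eq r_less by simp
  then have lo_le_q: "lo \<le> q" by (metis mult_less_cancel1 less_Suc_eq_le)
  have "j * q \<le> j * hi" using upper v_eq by linarith
  then have q_le_hi: "q \<le> hi" using False by simp
  have Suc_q_le_hi: "Suc q \<le> hi" if "r > 0"
  proof -
    have "j * q < j * hi" using upper v_eq that by linarith
    then show ?thesis by simp
  qed
  define xs where "xs = replicate (j - r) q @ replicate r (Suc q)"
  have "sum_list xs = (j - r) * q + r * q + r" by (simp add: xs_def sum_list_replicate)
  also have "\<dots> = v" using v_eq r_less by (simp add: add_mult_distrib[symmetric])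
  finally have "sum_list xs = v" .
  moreover have "set xs \<subseteq> {lo..hi}"
    using lo_le_q q_le_hi Suc_q_le_hi by (auto simp: xs_def set_replicate_conv_if)
  moreover have "length xs = j" using r_less by (simp add: xs_def)
  ultimately show ?thesis by blast
qed

lemma mono_solution_from_interval:
  assumes m_pos: "m \<ge> 1"
    and ys: "set ys \<subseteq> {1..n}" "\<forall>y\<in>set ys. col y = c" "length ys \<le> m - 1"
    and interval: "1 \<le> lo" "hi \<le> n" "\<forall>y\<in>{lo..hi}. col y = c"
    and w: "w \<in> {1..n}" "col w = c"
    and lower: "sum_list ys + (m - 1 - length ys) * lo \<le> a * w"
    and upper: "a * w \<le> sum_list ys + (m - 1 - length ys) * hi"
  shows "has_mono_solution m a n col"
proof -
  have "(m - 1 - length ys) * lo \<le> a * w - sum_list ys"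
    and "a * w - sum_list ys \<le> (m - 1 - length ys) * hi"
    using lower upper by linarith+
  then obtain zs where zs: "length zs = m - 1 - length ys" "set zs \<subseteq> {lo..hi}"
      "sum_list zs = a * w - sum_list ys"
    using sum_list_in_interval by blast
  show ?thesis
  proof (rule mono_solution_of_list[where xs = "ys @ zs"])
    show "length (ys @ zs) = m - 1" using zs(1) ys(3) by simp
    show "set (ys @ zs) \<subseteq> {1..n}" using ys(1) zs(2) interval(1,2) by auto
    show "\<forall>x\<in>set (ys @ zs). col x = c" using ys(2) zs(2) interval(3) by auto
    show "sum_list (ys @ zs) = a * w" using zs(3) lower by simp
  qed (use m_pos w in auto)
qed

lemma Cma_lower_bound:
  fixes m a :: nat
  assumes "a > 0"
  shows "(m - 1) * (m - 1) \<le> a * a * Cma m a"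
proof -
  define r where "r = (of_nat (m - 1) / of_nat a :: real)"
  have "r * r \<le> r * of_int (ceiling r)"
    using r_def by (intro mult_left_mono) auto
  also have "\<dots> \<le> real (Cma m a)"
    unfolding Cma_def r_def[symmetric] by linarith
  finally have r_sq: "r * r \<le> real (Cma m a)" .
  have "real ((m - 1) * (m - 1)) = (real a * real a) * (r * r)"
    using assms by (simp add: r_def field_simps)
  also have "\<dots> \<le> (real a * real a) * real (Cma m a)"
    using r_sq by (intro mult_left_mono) auto
  finally show ?thesis by (simp only: of_nat_le_iff flip: of_nat_mult)
qed

text \<open>With
  S = m - 1, L = ceil(S(A-2)/A) and U = floor(S(A-1)/A) (given through the bounds
  on A*L and A*U), the first says that U + A - 1 <= S.\<close>
lemma hi_margin:
  fixes A S U :: int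
  assumes "A \<ge> 3" "S \<ge> 2 * A^2 - A + 1" "A * U \<le> S * (A - 1)"
  shows "U + (A - 1) \<le> S"
proof -
  have "A * A \<ge> 3 * A" using assms(1) by (intro mult_right_mono) auto
  then have "S \<ge> A * A - A" using assms(1,2) unfolding power2_eq_square by linarith
  have "A * (U + (A - 1)) \<le> S * (A - 1) + (A * A - A)"
    using assms(3) by (simp add: algebra_simps)
  also have "\<dots> = A * S - (S - (A * A - A))" by (simp add: algebra_simps)
  also have "\<dots> \<le> A * S" using \<open>S \<ge> A * A - A\<close> by simp
  finally show ?thesis using assms(1) by simp
qed

lemma block_of_ones_fits:
  fixes A S L U :: int
  assumes A: "A \<ge> 3" and S: "S \<ge> 2 * A^2 - A + 1"
    and L: "A * L \<le> S * (A - 2) + A - 1" and U: "S * (A - 1) < A * U + A"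
  shows "(S - (A - 1)) * 1 + (A - 1) * L \<le> A * U"
proof -
  have square: "A * A \<ge> 3 * A" using A by (intro mult_right_mono) auto
  then have S_large: "S \<ge> A * A - 2 * A + 1" using A S unfolding power2_eq_square by linarith
  then have "S \<ge> 0" using A square by linarith
  then have "S * (A - 2) \<ge> S * 1" using A by (intro mult_left_mono) auto
  then have slack: "S * (A - 2) \<ge> (A - 1) * (A - 1)"
    using S_large by (simp add: algebra_simps)
  have "A * ((S - (A - 1)) * 1 + (A - 1) * L) = (A - 1) * (A * L) + (A * S - A * A + A)"
    by (simp add: algebra_simps)
  also have "\<dots> \<le> (A - 1) * (S * (A - 2) + A - 1) + (A * S - A * A + A)"
    using A L by (intro add_right_mono mult_left_mono) auto
  also have "\<dots> = A * (S * (A - 1) - A + 1) - (S * (A - 2) - (A - 1) * (A - 1))"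
    by (simp add: algebra_simps)
  also have "\<dots> \<le> A * (S * (A - 1) - A + 1)" using slack by linarith
  also have "\<dots> \<le> A * (A * U)" using A U by (intro mult_left_mono) auto
  finally show ?thesis using A by simp
qed

lemma block_of_twos_fits:
  fixes A S L U :: int
  assumes A: "A \<ge> 5" and S: "S \<ge> 2 * A^2 - A + 1"
    and L: "A * L \<le> S * (A - 2) + A - 1" and U: "S * (A - 1) < A * U + A"
  shows "(S - (A - 2)) * 2 + (A - 2) * L \<le> A * U"
proof -
  have "A * A \<ge> 3 * A" using A by (intro mult_right_mono) auto
  then have S_large: "S \<ge> 2" using A S unfolding power2_eq_square by linarith
  have "S * (A - 4) \<ge> S * 1" using A S_large by (intro mult_left_mono) auto
  then have slack: "S * (A - 4) \<ge> 2" using S_large by linarith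
  have "A * ((S - (A - 2)) * 2 + (A - 2) * L) = (A - 2) * (A * L) + (2 * A * S - 2 * A * A + 4 * A)"
    by (simp add: algebra_simps)
  also have "\<dots> \<le> (A - 2) * (S * (A - 2) + A - 1) + (2 * A * S - 2 * A * A + 4 * A)"
    using A L by (intro add_right_mono mult_left_mono) auto
  also have "\<dots> = A * (S * (A - 1) - A + 1) - (S * (A - 4) - 2)"
    by (simp add: algebra_simps)
  also have "\<dots> \<le> A * (S * (A - 1) - A + 1)" using slack by linarith
  also have "\<dots> \<le> A * (A * U)" using A U by (intro mult_left_mono) auto
  finally show ?thesis using A by simp
qed

locale avoiding_colouring =
  fixes m a :: nat and col :: "nat \<Rightarrow> bool"
  assumes a_ge_3: "a \<ge> 3"
    and m_large: "m \<ge> 2 * a^2 - a + 2"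
    and no_mono: "\<not> has_mono_solution m a (Cma m a) col"
    and red_a2: "col (a - 2)" and red_a1: "col (a - 1)"
begin

abbreviation s :: nat where "s \<equiv> m - 1"
abbreviation n :: nat where "n \<equiv> Cma m a"

text \<open>The interval [lo, hi] = [ceil(s(a-2)/a), floor(s(a-1)/a)] consists of the numbers y
  with s(a-2) <= a*y <= s(a-1).\<close>
definition lo :: nat where "lo = (s * (a - 2) + (a - 1)) div a"
definition hi :: nat where "hi = s * (a - 1) div a"

lemma m_pos: "m \<ge> 1"
  using m_large by linarith

lemma s_large: "a * (a - 1) \<le> s" "2 * a \<le> s"
proof -
  have "a * a \<ge> 3 * a" using a_ge_3 by simp
  moreover have "a * (a - 1) \<le> a * a" by simp
  ultimately show "a * (a - 1) \<le> s" "2 * a \<le> s"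
    using m_large unfolding power2_eq_square by linarith+
qed

lemma int_s_large: "int s \<ge> 2 * (int a)^2 - int a + 1"
proof -
  have "a \<le> 2 * (a * a)" by simp
  then have "int (2 * (a * a) - a + 1) = 2 * (int a)^2 - int a + 1"
    by (simp add: of_nat_diff power2_eq_square)
  moreover have "2 * (a * a) - a + 1 \<le> s" using m_large unfolding power2_eq_square by linarith
  ultimately show ?thesis by linarith
qed

text \<open>This bound keeps all the numbers used below inside [C(m,a)].\<close>
lemma s_sq_le: "s * s \<le> a * a * n"
  using Cma_lower_bound a_ge_3 by simp

lemma lo_bounds: "s * (a - 2) \<le> a * lo" "a * lo \<le> s * (a - 2) + (a - 1)"
proof -
  have "a * lo + (s * (a - 2) + (a - 1)) mod a = s * (a - 2) + (a - 1)"
    unfolding lo_def by (rule mult_div_mod_eq)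
  moreover have "(s * (a - 2) + (a - 1)) mod a < a" using a_ge_3 by simp
  ultimately show "s * (a - 2) \<le> a * lo" "a * lo \<le> s * (a - 2) + (a - 1)" by linarith+
qed

lemma hi_bounds: "a * hi \<le> s * (a - 1)" "s * (a - 1) < a * hi + a"
proof -
  have "a * hi + s * (a - 1) mod a = s * (a - 1)"
    unfolding hi_def by (rule mult_div_mod_eq)
  moreover have "s * (a - 1) mod a < a" using a_ge_3 by simp
  ultimately show "a * hi \<le> s * (a - 1)" "s * (a - 1) < a * hi + a" by linarith+
qed

lemma int_bounds:
  "int a * int lo \<le> int s * (int a - 2) + int a - 1"
  "int s * (int a - 1) < int a * int hi + int a"
  "int a * int hi \<le> int s * (int a - 1)"
proof -
  have int_diff: "int (a - 1) = int a - 1" "int (a - 2) = int a - 2" using a_ge_3 by auto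
  have "int (a * lo) \<le> int (s * (a - 2) + (a - 1))"
    and "int (s * (a - 1)) < int (a * hi + a)"
    and "int (a * hi) \<le> int (s * (a - 1))"
    using lo_bounds hi_bounds by (simp_all only: of_nat_le_iff of_nat_less_iff)
  then show "int a * int lo \<le> int s * (int a - 2) + int a - 1"
    and "int s * (int a - 1) < int a * int hi + int a"
    and "int a * int hi \<le> int s * (int a - 1)"
    unfolding of_nat_mult of_nat_add int_diff by linarith+
qed

lemma interval_ordered: "a - 1 \<le> lo" "lo \<le> hi" "hi \<le> n"
proof -
  have "s * 1 \<le> s * (a - 2)" using a_ge_3 by (intro mult_le_mono2) simp
  then have "a * (a - 1) \<le> a * lo" using s_large lo_bounds by linarith
  then show "a - 1 \<le> lo" using a_ge_3 by simp
  have "a - 1 = Suc (a - 2)" using a_ge_3 by simp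
  then have "s * (a - 1) = s * (a - 2) + s" by simp
  moreover have "a - 1 \<le> s" using s_large(2) by simp
  ultimately have "a * lo < a * hi + a" using lo_bounds(2) hi_bounds(2) by linarith
  then have "a * lo < a * Suc hi" by simp
  then show "lo \<le> hi" by (metis mult_less_cancel1 less_Suc_eq_le)
  have "a * (a * hi) \<le> s * (a * (a - 1))" using hi_bounds by (simp add: ac_simps)
  also have "\<dots> \<le> s * s" using s_large by simp
  also have "\<dots> \<le> a * (a * n)" using s_sq_le by (simp add: ac_simps)
  finally show "hi \<le> n" using a_ge_3 by simp
qed

text \<open>Every number of [lo, hi] is blue: a*y is a sum of s numbers from the red pair
  {a - 2, a - 1}.\<close>
lemma middle_blue:
  assumes "lo \<le> y" "y \<le> hi"
  shows "\<not> col y"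
proof
  assume red: "col y"
  have "has_mono_solution m a n col"
  proof (rule mono_solution_from_interval[where ys = "[]" and lo = "a - 2" and hi = "a - 1"
        and w = y and c = True])
    show "\<forall>z\<in>{a - 2..a - 1}. col z = True"
    proof
      fix z assume "z \<in> {a - 2..a - 1}"
      then have "z = a - 2 \<or> z = a - 1" by auto
      then show "col z = True" using red_a1 red_a2 by auto
    qed
    have "a * lo \<le> a * y" "a * y \<le> a * hi" using assms by simp_all
    then have "s * (a - 2) \<le> a * y" "a * y \<le> s * (a - 1)"
      using lo_bounds(1) hi_bounds(1) by linarith+
    then show "sum_list [] + (s - length []) * (a - 2) \<le> a * y"
      and "a * y \<le> sum_list [] + (s - length []) * (a - 1)" by simp_all
  qed (use m_pos a_ge_3 red assms interval_ordered in auto)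
  then show False using no_mono by simp
qed

lemma red_if_block_fits:
  assumes t: "1 \<le> t" "t \<le> n" and j: "j \<le> s"
    and lower: "(s - j) * t + j * lo \<le> a * hi"
    and upper: "a * hi \<le> (s - j) * t + j * hi"
  shows "col t"
proof (rule ccontr)
  assume blue: "\<not> col t"
  have "has_mono_solution m a n col"
  proof (rule mono_solution_from_interval[where ys = "replicate (s - j) t" and lo = lo
        and hi = hi and w = hi and c = False])
    show "\<forall>y\<in>{lo..hi}. col y = False" using middle_blue by auto
    show "col hi = False" using middle_blue interval_ordered(2) by simp
    show "sum_list (replicate (s - j) t) + (s - length (replicate (s - j) t)) * lo \<le> a * hi"
      using lower by (simp only: length_replicate sum_list_replicate of_nat_id diff_diff_cancel[OF j])
    show "a * hi \<le> sum_list (replicate (s - j) t) + (s - length (replicate (s - j) t)) * hi"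
      using upper by (simp only: length_replicate sum_list_replicate of_nat_id diff_diff_cancel[OF j])
  qed (use m_pos t blue interval_ordered a_ge_3 in \<open>auto simp: set_replicate_conv_if\<close>)
  then show False using no_mono by simp
qed

lemma hi_plus_le: "hi + (a - 1) \<le> s"
  using hi_margin[OF _ int_s_large int_bounds(3)] a_ge_3 by linarith

text \<open>Take j = a - 1.\<close>
lemma red_1: "col 1"
proof (rule red_if_block_fits[where j = "a - 1"])
  have "a - 1 \<le> s" using hi_plus_le by simp
  then have "int ((s - (a - 1)) * 1 + (a - 1) * lo) = (int s - (int a - 1)) * 1 + (int a - 1) * int lo"
    using a_ge_3 by (simp only: of_nat_add of_nat_mult of_nat_diff) simp
  also have "\<dots> \<le> int (a * hi)"
    unfolding of_nat_mult
    by (rule block_of_ones_fits[OF _ int_s_large int_bounds(1,2)]) (use a_ge_3 in simp)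
  finally show "(s - (a - 1)) * 1 + (a - 1) * lo \<le> a * hi" by (simp only: of_nat_le_iff)
  have "a = (a - 1) + 1" using a_ge_3 by simp
  then have "a * hi = (a - 1) * hi + hi" by (metis add_mult_distrib mult_1)
  then show "a * hi \<le> (s - (a - 1)) * 1 + (a - 1) * hi" using hi_plus_le by linarith
  show "1 \<le> n" "a - 1 \<le> s" using interval_ordered a_ge_3 hi_plus_le by linarith+
qed simp

text \<open>For a >= 5 take j = a - 2; for a = 3, 4 the number 2 is one of a - 2, a - 1.\<close>
lemma red_2: "col 2"
proof (cases "a \<le> 4")
  case True
  then have "a = 3 \<or> a = 4" using a_ge_3 by linarith
  then show ?thesis using red_a1 red_a2 by auto
next
  case False
  show ?thesis
  proof (rule red_if_block_fits[where j = "a - 2"])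
    have "a - 2 \<le> s" using hi_plus_le by simp
    then have "int ((s - (a - 2)) * 2 + (a - 2) * lo) = (int s - (int a - 2)) * 2 + (int a - 2) * int lo"
      using a_ge_3 by (simp only: of_nat_add of_nat_mult of_nat_diff) simp
    also have "\<dots> \<le> int (a * hi)"
      unfolding of_nat_mult
      by (rule block_of_twos_fits[OF _ int_s_large int_bounds(1,2)]) (use False in simp)
    finally show "(s - (a - 2)) * 2 + (a - 2) * lo \<le> a * hi" by (simp only: of_nat_le_iff)
    have "a = (a - 2) + 2" using a_ge_3 by simp
    then have "a * hi = (a - 2) * hi + 2 * hi" by (metis add_mult_distrib)
    then show "a * hi \<le> (s - (a - 2)) * 2 + (a - 2) * hi" using hi_plus_le by linarith
    show "2 \<le> n" "a - 2 \<le> s" using interval_ordered a_ge_3 hi_plus_le by linarith+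
  qed simp
qed

text \<open>The statement of the theorem in the locale: d = a*(d/a) is a sum of s ones and twos,
  all red, so d/a must be blue.\<close>
lemma multiples_blue:
  assumes "a dvd d" "s \<le> d" "d \<le> 2 * s"
  shows "\<not> col (d div a)"
proof
  assume red: "col (d div a)"
  define k where "k = d div a"
  have d_eq: "d = a * k" using assms(1) by (simp add: k_def)
  have k_pos: "1 \<le> k" using d_eq assms(2) s_large a_ge_3 by (cases k) auto
  have "a * (a * k) \<le> s * (2 * a)" using d_eq assms(3) by simp
  also have "\<dots> \<le> s * s" using s_large by simp
  also have "\<dots> \<le> a * (a * n)" using s_sq_le by (simp add: ac_simps)
  finally have k_le: "k \<le> n" using a_ge_3 by simp
  have reds: "\<forall>z\<in>{1..2}. col z" using red_1 red_2 by (auto simp: le_Suc_eq numeral_2_eq_2)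
  have "has_mono_solution m a n col"
  proof (rule mono_solution_from_interval[where ys = "[]" and lo = 1 and hi = 2 and w = k and c = True])
    show "2 \<le> n" using interval_ordered a_ge_3 by linarith
    show "sum_list [] + (s - length []) * 1 \<le> a * k" using d_eq assms(2) by simp
    show "a * k \<le> sum_list [] + (s - length []) * 2" using d_eq assms(3) by simp
  qed (use m_pos reds red k_pos k_le in \<open>auto simp: k_def\<close>)
  then show False using no_mono by simp
qed

end

theorem lemma9:
  fixes m a d :: nat and col :: "nat \<Rightarrow> bool"
  assumes "a \<ge> 3"
    and "m \<ge> 2 * a^2 - a + 2"
    and "\<not> has_mono_solution m a (Cma m a) col"
    and "col (a - 2)" and "col (a - 1)"
    and "a dvd d" and "m - 1 \<le> d" and "d \<le> 2 * m - 2"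
  shows "\<not> col (d div a)"
proof -
  interpret avoiding_colouring m a col
    using assms(1-5) by unfold_locales
  have "d \<le> 2 * (m - 1)" using assms(8) by simp
  then show ?thesis using multiples_blue assms(6,7) by blast
qed

end
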